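(* Let $G^\sigma$ be a connected oriented unicyclic graph of order $n$ with girth $k<n$, and let $C_k^\sigma$ be its cycle. (1) If $G^\sigma\in\mathscr{U}_1$, then $sr(G^\sigma)\leq n$ if $n$ is even and $sr(G^\sigma)\leq n-1$ if $n$ is odd. (2) If $G^\sigma\in\mathscr{U}_2$, then $sr(G^\sigma)\leq n-1$ if $n$ and $k$ are odd; $\leq n-2$ if $n$ is even and $k$ is odd; $\leq n$ if $n$ is even and $C_k^\sigma$ is oddly-oriented; $\leq n-1$ if $n$ is odd and $C_k^\sigma$ is oddly-oriented; $\leq n-2$ if $n$ is even and $C_k^\sigma$ is evenly-oriented; $\leq n-3$ if $n$ is odd and $C_k^\sigma$ is evenly-oriented.
   Context: An oriented graph $G^\sigma$ is a simple graph with an orientation of each edge. Its skew-adjacency matrix $S(G^\sigma)=(s_{ij})$ has $s_{ij}=1$ if there is an arc from $v_i$ to $v_j$, $s_{ij}=-1$ if there is an arc from $v_j$ to $v_i$, and $0$ otherwise; $sr(G^\sigma)$ is its rank. For an even cycle $u_1\cdots u_ku_1$, its sign is the sign of $\prod_{i=1}^k s_{u_iu_{i+1}}$ ($u_{k+1}=u_1$); it is evenly-oriented if the sign is positive, oddly-oriented if negative. A $\delta$-transformation deletes a pendant vertex (a vertex of degree one) together with its unique neighbor and all incident edges. $\mathscr{U}_1$ is the set of oriented unicyclic graphs of order $n$ with girth $k$ that can be transformed into a graph without edges by finitely many $\delta$-transformations; $\mathscr{U}_2$ is the set of those that can be transformed into the oriented cycle $C_k^\sigma$, or the disjoint union of $C_k^\sigma$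 with isolated vertices, by finitely many $\delta$-transformations. *)

theory Defs
  imports "HOL-Analysis.Analysis"
begin

definition oriented_graph :: "('n \<Rightarrow> 'n \<Rightarrow> bool) \<Rightarrow> bool" where
  "oriented_graph D \<longleftrightarrow> (\<forall>u. \<not> D u u) \<and> (\<forall>u v. \<not> (D u v \<and> D v u))"

definition adj :: "('n \<Rightarrow> 'n \<Rightarrow> bool) \<Rightarrow> 'n \<Rightarrow> 'n \<Rightarrow> bool" where
  "adj D u v \<longleftrightarrow> D u v \<or> D v u"

definition skew_adj :: "('n::finite \<Rightarrow> 'n \<Rightarrow> bool) \<Rightarrow> real^'n^'n" where
  "skew_adj D = (\<chi> i j. if D i j then 1 else if D j i then -1 else 0)"

definition sr :: "('n::finite \<Rightarrow> 'n \<Rightarrow> bool) \<Rightarrow> nat" where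
  "sr D = rank (skew_adj D)"

definition connected_graph :: "('n \<Rightarrow> 'n \<Rightarrow> bool) \<Rightarrow> bool" where
  "connected_graph D \<longleftrightarrow> (\<forall>u v. (adj D)\<^sup>*\<^sup>* u v)"

definition is_cycle :: "('n \<Rightarrow> 'n \<Rightarrow> bool) \<Rightarrow> 'n list \<Rightarrow> bool" where
  "is_cycle D cs \<longleftrightarrow> length cs \<ge> 3 \<and> distinct cs \<and>
     (\<forall>i < length cs. adj D (cs ! i) (cs ! ((i + 1) mod length cs)))"

definition cycle_edges :: "'n list \<Rightarrow> 'n set set" where
  "cycle_edges cs = {{cs ! i, cs ! ((i + 1) mod length cs)} | i. i < length cs}"

definition unicyclic :: "('n \<Rightarrow> 'n \<Rightarrow> bool) \<Rightarrow> bool" where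
  "unicyclic D \<longleftrightarrow> connected_graph D \<and> (\<exists>cs. is_cycle D cs) \<and>
     (\<forall>cs cs'. is_cycle D cs \<longrightarrow> is_cycle D cs' \<longrightarrow> cycle_edges cs = cycle_edges cs')"

definition evenly_oriented :: "('n::finite \<Rightarrow> 'n \<Rightarrow> bool) \<Rightarrow> 'n list \<Rightarrow> bool" where
  "evenly_oriented D cs \<longleftrightarrow>
     (\<Prod>i<length cs. skew_adj D $ (cs ! i) $ (cs ! ((i + 1) mod length cs))) > 0"

definition oddly_oriented :: "('n::finite \<Rightarrow> 'n \<Rightarrow> bool) \<Rightarrow> 'n list \<Rightarrow> bool" where
  "oddly_oriented D cs \<longleftrightarrow>
     (\<Prod>i<length cs. skew_adj D $ (cs ! i) $ (cs ! ((i + 1) mod length cs))) < 0"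

definition delta_step :: "('n \<Rightarrow> 'n \<Rightarrow> bool) \<Rightarrow> 'n set \<Rightarrow> 'n set \<Rightarrow> bool" where
  "delta_step D V V' \<longleftrightarrow>
     (\<exists>u v. u \<in> V \<and> {w \<in> V. adj D u w} = {v} \<and> V' = V - {u, v})"

definition in_U1 :: "('n \<Rightarrow> 'n \<Rightarrow> bool) \<Rightarrow> bool" where
  "in_U1 D \<longleftrightarrow> (\<exists>V'. (delta_step D)\<^sup>*\<^sup>* UNIV V' \<and>
     (\<forall>u\<in>V'. \<forall>v\<in>V'. \<not> adj D u v))"

definition in_U2 :: "('n \<Rightarrow> 'n \<Rightarrow> bool) \<Rightarrow> 'n list \<Rightarrow> bool" where
  "in_U2 D cs \<longleftrightarrow> (\<exists>V'. (delta_step D)\<^sup>*\<^sup>* UNIV V' \<and> set cs \<subseteq> V' \<and>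
     (\<forall>u\<in>V'. \<forall>v\<in>V'. adj D u v \<longrightarrow> u \<in> set cs \<and> v \<in> set cs))"

end

theory Submission
  imports Defs
begin

text \<open>A \<delta>-transformation deletes two vertices and lowers the rank of the skew-adjacency matrix
  by at most two, since only the column of the deleted neighbour v and the unit vector at v are
  needed on top of the columns of the smaller graph. After the \<delta>-transformations the remaining
  graph is edgeless (U1) or the cycle plus isolated vertices (U2), and the parity bounds follow
  from counting: after t transformations n - 2t vertices remain, at least k of them on the cycle.
  Unicyclicity rules out chords, so the row of a cycle vertex c(i) has exactly the two entries
  s(i) at c(i+1) and -s(i-1) at c(i-1), where s(i) = +-1. A kernel vector x must satisfy
  x(i+1) = s(i-1) s(i) x(i-1); solving this recurrence around the cycle gives one kernel vector
  for odd k and two independent ones for an evenly-oriented cycle of even length.\<close>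

lemma skew_adj_entry: "skew_adj D $ i $ j = (if D i j then 1 else if D j i then -1 else 0)"
  by (simp add: skew_adj_def)

lemma skew_adj_antisym: "oriented_graph D \<Longrightarrow> skew_adj D $ j $ i = - skew_adj D $ i $ j"
  by (auto simp: skew_adj_entry oriented_graph_def)

lemma skew_adj_eq_0_if_not_adj: "\<not> adj D i j \<Longrightarrow> skew_adj D $ i $ j = 0"
  by (auto simp: skew_adj_entry adj_def)

lemma skew_adj_square_if_adj:
  "oriented_graph D \<Longrightarrow> adj D i j \<Longrightarrow> skew_adj D $ i $ j * skew_adj D $ i $ j = 1"
  by (auto simp: skew_adj_entry adj_def oriented_graph_def)

lemma adj_commute: "adj D i j = adj D j i"
  by (auto simp: adj_def)

lemma adj_irrefl: "oriented_graph D \<Longrightarrow> \<not> adj D i i"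
  by (auto simp: adj_def oriented_graph_def)

text \<open>The skew-adjacency matrix of the subgraph induced by V, padded with zero rows and columns
  so that it keeps the index type of the whole graph.\<close>

definition induced_skew_adj :: "('n::finite \<Rightarrow> 'n \<Rightarrow> bool) \<Rightarrow> 'n set \<Rightarrow> real^'n^'n" where
  "induced_skew_adj D V = (\<chi> i j. if i \<in> V \<and> j \<in> V then skew_adj D $ i $ j else 0)"

lemma induced_skew_adj_UNIV: "induced_skew_adj D UNIV = skew_adj D"
  by (simp add: induced_skew_adj_def vec_eq_iff)

lemma induced_skew_adj_eq_0_if_no_edges:
  "\<forall>u\<in>V. \<forall>v\<in>V. \<not> adj D u v \<Longrightarrow> induced_skew_adj D V = 0"
  by (auto simp: induced_skew_adj_def vec_eq_iff skew_adj_eq_0_if_not_adj)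

subsection \<open>\<delta>-transformations\<close>

lemma card_delta_step:
  fixes D :: "'n::finite \<Rightarrow> 'n \<Rightarrow> bool"
  assumes "oriented_graph D" and "delta_step D V V'"
  shows "card V' + 2 = card V"
proof -
  obtain u v where "u \<in> V" "v \<in> V" "adj D u v" "V' = V - {u, v}"
    using assms(2) by (auto simp: delta_step_def)
  moreover have "u \<noteq> v" using \<open>adj D u v\<close> adj_irrefl[OF assms(1)] by metis
  moreover have "card {u, v} \<le> card V" by (rule card_mono) (use calculation in auto)
  ultimately show ?thesis by (simp add: card_Diff_subset)
qed

lemma rank_induced_skew_adj_delta_step:
  fixes D :: "'n::finite \<Rightarrow> 'n \<Rightarrow> bool"
  assumes og: "oriented_graph D" and ds: "delta_step D V V'"
  shows "rank (induced_skew_adj D V) \<le> rank (induced_skew_adj D V') + 2"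
proof -
  obtain u v where u: "u \<in> V" and nb: "{w \<in> V. adj D u w} = {v}" and V': "V' = V - {u, v}"
    using ds by (auto simp: delta_step_def)
  have v: "v \<in> V" "adj D u v" using nb by auto
  have nadj: "\<And>w. w \<in> V \<Longrightarrow> w \<noteq> v \<Longrightarrow> \<not> adj D u w" using nb by auto
  let ?M = "induced_skew_adj D V" and ?M' = "induced_skew_adj D V'"
  let ?e = "axis v 1 :: real^'n"
  let ?S = "insert (column v ?M) (insert ?e (columns ?M'))"
  have "column w ?M \<in> span ?S" for w
  proof -
    consider "w = v" | "w \<notin> V" | "w = u" | "w \<in> V" "w \<noteq> u" "w \<noteq> v" by blast
    then show ?thesis
    proof cases
      case 1
      then show ?thesis by (simp add: span_base)
    next
      case 2
      then have "column w ?M = 0" by (simp add: column_def induced_skew_adj_def vec_eq_iff)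
      then show ?thesis by (simp add: span_zero)
    next
      case 3
      have "column w ?M = skew_adj D $ v $ u *\<^sub>R ?e"
        using 3 u v nadj skew_adj_eq_0_if_not_adj[of D u] skew_adj_antisym[OF og, of u]
        by (auto simp: column_def induced_skew_adj_def vec_eq_iff axis_def adj_commute)
      then show ?thesis by (simp add: span_base span_mul)
    next
      case 4
      have "column w ?M = column w ?M' + skew_adj D $ v $ w *\<^sub>R ?e"
        using 4 u v nadj[of w] skew_adj_eq_0_if_not_adj[of D u w] unfolding V'
        by (auto simp: column_def induced_skew_adj_def vec_eq_iff axis_def)
      moreover have "column w ?M' \<in> columns ?M'" by (auto simp: columns_def)
      ultimately show ?thesis by (simp add: span_base span_mul span_add)
    qed
  qed
  then have "columns ?M \<subseteq> span ?S" by (auto simp: columns_def)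
  then have "dim (columns ?M) \<le> dim ?S" by (rule dim_mono)
  also have "\<dots> \<le> dim (columns ?M') + 2" by (simp add: dim_insert)
  finally show ?thesis by (simp add: column_rank_def)
qed

lemma sr_le_after_delta_steps:
  fixes D :: "'n::finite \<Rightarrow> 'n \<Rightarrow> bool"
  assumes og: "oriented_graph D" and steps: "(delta_step D)\<^sup>*\<^sup>* UNIV V'"
  shows "\<exists>t. card V' + 2 * t = CARD('n) \<and> sr D \<le> rank (induced_skew_adj D V') + 2 * t"
  using steps
proof (induction rule: rtranclp_induct)
  case base
  then show ?case by (auto simp: sr_def induced_skew_adj_UNIV)
next
  case (step V V')
  then obtain t where "card V + 2 * t = CARD('n)" "sr D \<le> rank (induced_skew_adj D V) + 2 * t"
    by blast
  with card_delta_step[OF og step(2)] rank_induced_skew_adj_delta_step[OF og step(2)]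
  show ?case by (intro exI[of _ "Suc t"]) auto
qed

lemma sr_le_if_in_U1:
  fixes D :: "'n::finite \<Rightarrow> 'n \<Rightarrow> bool"
  assumes "oriented_graph D" and "in_U1 D"
  shows "sr D \<le> 2 * (CARD('n) div 2)"
proof -
  obtain V' where steps: "(delta_step D)\<^sup>*\<^sup>* UNIV V'" and "\<forall>u\<in>V'. \<forall>v\<in>V'. \<not> adj D u v"
    using assms(2) by (auto simp: in_U1_def)
  then have "induced_skew_adj D V' = 0" using induced_skew_adj_eq_0_if_no_edges by blast
  with sr_le_after_delta_steps[OF assms(1) steps]
  obtain t where "card V' + 2 * t = CARD('n)" "sr D \<le> 2 * t" by auto
  then show ?thesis by presburger
qed

lemma sr_le_if_in_U2:
  fixes D :: "'n::finite \<Rightarrow> 'n \<Rightarrow> bool"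
  assumes "oriented_graph D" and "is_cycle D cs" and "in_U2 D cs"
  shows "\<exists>c t. length cs \<le> c \<and> c + 2 * t = CARD('n) \<and>
           sr D \<le> rank (induced_skew_adj D (set cs)) + 2 * t"
proof -
  obtain V' where steps: "(delta_step D)\<^sup>*\<^sup>* UNIV V'" and sub: "set cs \<subseteq> V'"
    and edges: "\<forall>u\<in>V'. \<forall>v\<in>V'. adj D u v \<longrightarrow> u \<in> set cs \<and> v \<in> set cs"
    using assms(3) by (auto simp: in_U2_def)
  have "induced_skew_adj D V' = induced_skew_adj D (set cs)"
    using sub edges skew_adj_eq_0_if_not_adj[of D]
    by (auto simp: induced_skew_adj_def vec_eq_iff) blast+
  moreover have "length cs \<le> card V'"
    using assms(2) card_mono[OF finite sub] by (simp add: is_cycle_def distinct_card)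
  ultimately show ?thesis using sr_le_after_delta_steps[OF assms(1) steps] by auto
qed

subsection \<open>The cycle of a unicyclic graph has no chords\<close>

lemma doubleton_in_cycle_edges:
  assumes "distinct cs" and "i < length cs" and "j < length cs"
    and "{cs ! i, cs ! j} \<in> cycle_edges cs"
  shows "j = (i + 1) mod length cs \<or> i = (j + 1) mod length cs"
proof -
  obtain m where m: "m < length cs" "{cs ! i, cs ! j} = {cs ! m, cs ! ((m + 1) mod length cs)}"
    using assms(4) unfolding cycle_edges_def by blast
  have "(m + 1) mod length cs < length cs" using m(1) by (metis mod_less_divisor not_less0 neq0_conv)
  with m assms(1-3) show ?thesis by (auto simp: doubleton_eq_iff nth_eq_iff_index_eq)
qed

lemma is_cycle_shortcut:
  assumes cy: "is_cycle D cs" and ij: "i + 2 \<le> j" "j < length cs"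
    and chord: "adj D (cs ! i) (cs ! j)"
  shows "is_cycle D (take (j - i + 1) (drop i cs))"
    and "{cs ! i, cs ! j} \<in> cycle_edges (take (j - i + 1) (drop i cs))"
proof -
  let ?L = "j - i + 1" and ?c = "take (j - i + 1) (drop i cs)"
  have len: "length ?c = ?L" and nth: "\<And>l. l < ?L \<Longrightarrow> ?c ! l = cs ! (i + l)"
    using ij by auto
  have cyc: "\<And>l. l < length cs \<Longrightarrow> adj D (cs ! l) (cs ! ((l + 1) mod length cs))"
    using cy by (simp add: is_cycle_def)
  have closing: "?c ! (?L - 1) = cs ! j" "?c ! ((?L - 1 + 1) mod ?L) = cs ! i"
    using nth ij by auto
  show "is_cycle D ?c"
    unfolding is_cycle_def
  proof (intro conjI allI impI)
    show "3 \<le> length ?c" "distinct ?c" using ij cy len by (auto simp: is_cycle_def)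
    fix l assume l: "l < length ?c"
    show "adj D (?c ! l) (?c ! ((l + 1) mod length ?c))"
    proof (cases "l + 1 < ?L")
      case True
      then show ?thesis using cyc[of "i + l"] nth[of l] nth[of "l + 1"] ij len by auto
    next
      case False
      then have "l = ?L - 1" using l len by auto
      then show ?thesis using closing chord len by (simp add: adj_commute)
    qed
  qed
  have "{?c ! (?L - 1), ?c ! ((?L - 1 + 1) mod ?L)} \<in> cycle_edges ?c"
    unfolding cycle_edges_def len using ij by (intro CollectI exI[of _ "?L - 1"]) simp
  then show "{cs ! i, cs ! j} \<in> cycle_edges ?c"
    using closing by (simp add: insert_commute)
qed

lemma unicyclic_adj_cycle_nth:
  assumes og: "oriented_graph D" and uc: "unicyclic D" and cy: "is_cycle D cs"
    and ij: "i < length cs" "j < length cs" and a: "adj D (cs ! i) (cs ! j)"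
  shows "j = (i + 1) mod length cs \<or> i = (j + 1) mod length cs"
proof -
  have dist: "distinct cs" using cy by (simp add: is_cycle_def)
  have "j = (i + 1) mod length cs \<or> i = (j + 1) mod length cs"
    if "i < j" "j < length cs" "adj D (cs ! i) (cs ! j)" for i j
  proof (cases "j = i + 1")
    case True
    then show ?thesis using that by simp
  next
    case False
    then have "i + 2 \<le> j" using that by simp
    note shortcut = is_cycle_shortcut[OF cy this that(2,3)]
    have "cycle_edges (take (j - i + 1) (drop i cs)) = cycle_edges cs"
      using uc cy shortcut(1) unfolding unicyclic_def by blast
    moreover have "(i + 1) mod length cs = i + 1" using that(1,2) by simp
    ultimately show ?thesis
      using doubleton_in_cycle_edges[OF dist _ that(2), of i] shortcut(2) that(1,2) by simp
  qed
  moreover have "i \<noteq> j" using a adj_irrefl[OF og] by auto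
  ultimately show ?thesis using ij a adj_commute by (metis linorder_neqE_nat)
qed

subsection \<open>Kernel vectors of the cycle matrix\<close>

fun kernel_seq :: "(nat \<Rightarrow> real) \<Rightarrow> real \<Rightarrow> real \<Rightarrow> nat \<Rightarrow> real" where
  "kernel_seq s a b 0 = a"
| "kernel_seq s a b (Suc 0) = b"
| "kernel_seq s a b (Suc (Suc j)) = s j * s (Suc j) * kernel_seq s a b j"

lemma kernel_seq_even: "kernel_seq s a b (2 * m) = (\<Prod>i<2 * m. s i) * a"
  by (induction m) (auto simp: mult_ac)

lemma kernel_seq_odd: "kernel_seq s a b (2 * m + 1) = (\<Prod>i<2 * m. s (Suc i)) * b"
  by (induction m) (auto simp: mult_ac)

locale unicyclic_cycle =
  fixes D :: "'n::finite \<Rightarrow> 'n \<Rightarrow> bool" and cs :: "'n list"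
  assumes oriented: "oriented_graph D" and unicyclic: "unicyclic D" and cycle: "is_cycle D cs"
begin

abbreviation "k \<equiv> length cs"
abbreviation "M \<equiv> induced_skew_adj D (set cs)"

definition arc_sign :: "nat \<Rightarrow> real" where
  "arc_sign j = skew_adj D $ (cs ! (j mod k)) $ (cs ! ((j + 1) mod k))"

lemma length_ge_3: "k \<ge> 3"
  using cycle by (simp add: is_cycle_def)

lemma mod_length_less [simp]: "j mod k < k"
  using length_ge_3 by (intro mod_less_divisor) linarith

lemma arc_sign_square: "arc_sign j * arc_sign j = 1"
proof -
  have "adj D (cs ! (j mod k)) (cs ! ((j mod k + 1) mod k))"
    using cycle by (simp add: is_cycle_def)
  then show ?thesis
    unfolding arc_sign_def using skew_adj_square_if_adj[OF oriented] by (simp add: mod_Suc_eq)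
qed

lemma prod_arc_sign_square: "(\<Prod>i\<in>S. arc_sign (g i)) * (\<Prod>i\<in>S. arc_sign (g i)) = 1"
  by (simp add: prod.distrib[symmetric] arc_sign_square)

lemma arc_sign_periodic: "arc_sign (j + k) = arc_sign j"
  unfolding arc_sign_def by (metis add.commute mod_add_self1 add_Suc_right Suc_eq_plus1)

lemma kernel_seq_periodic:
  assumes "kernel_seq arc_sign a b k = a" "kernel_seq arc_sign a b (Suc k) = b"
  shows "kernel_seq arc_sign a b (j + k) = kernel_seq arc_sign a b j"
proof -
  let ?f = "kernel_seq arc_sign a b"
  have "?f (j + k) = ?f j \<and> ?f (Suc j + k) = ?f (Suc j)"
  proof (induction j)
    case 0
    then show ?case using assms by simp
  next
    case (Suc j)
    have "?f (Suc (Suc j) + k) = arc_sign (j + k) * arc_sign (Suc j + k) * ?f (j + k)" by simp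
    then show ?case using Suc arc_sign_periodic[of j] arc_sign_periodic[of "Suc j"] by simp
  qed
  then show ?thesis by simp
qed

lemma kernel_seq_mod:
  assumes "kernel_seq arc_sign a b k = a" "kernel_seq arc_sign a b (Suc k) = b"
  shows "kernel_seq arc_sign a b (j mod k) = kernel_seq arc_sign a b j"
proof -
  have "kernel_seq arc_sign a b (x + k * q) = kernel_seq arc_sign a b x" for x q
  proof (induction q)
    case (Suc q)
    have "kernel_seq arc_sign a b (x + k * Suc q) = kernel_seq arc_sign a b ((x + k * q) + k)"
      by (simp add: algebra_simps)
    also have "\<dots> = kernel_seq arc_sign a b x" using Suc kernel_seq_periodic[OF assms] by simp
    finally show ?case .
  qed simp
  from this[of "j mod k" "j div k"] show ?thesis by simp
qed

lemma cycle_matrix_entry: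
  "M $ r $ w = (if r \<in> set cs \<and> w \<in> set cs then skew_adj D $ r $ w else 0)"
  by (simp add: induced_skew_adj_def)

lemma cycle_matrix_row_sum:
  assumes i: "i < k"
  shows "(\<Sum>j<k. g j * M $ (cs ! i) $ (cs ! j)) =
         g ((i + 1) mod k) * arc_sign i - g ((i + k - 1) mod k) * arc_sign (i + k - 1)"
proof -
  define nxt prv where "nxt = (i + 1) mod k" and "prv = (i + k - 1) mod k"
  have nxt_eq: "nxt = (if i + 1 = k then 0 else i + 1)"
    using i unfolding nxt_def by auto
  have prv_eq: "prv = (if i = 0 then k - 1 else i - 1)"
  proof (cases "i = 0")
    case False
    then have "i + k - 1 = (i - 1) + k" by simp
    then show ?thesis using i False unfolding prv_def by (simp only: mod_add_self2) simp
  qed (use length_ge_3 in \<open>simp add: prv_def\<close>)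
  have idx: "nxt < k" "prv < k" "nxt \<noteq> prv"
    using i length_ge_3 nxt_eq prv_eq by auto
  have "g j * M $ (cs ! i) $ (cs ! j) = 0" if "j < k" "j \<noteq> nxt" "j \<noteq> prv" for j
  proof -
    have "i \<noteq> (j + 1) mod k"
    proof
      assume ij: "i = (j + 1) mod k"
      have "prv = j"
      proof (cases "j + 1 < k")
        case True
        then have "i = j + 1" using ij by simp
        then show ?thesis using prv_eq by simp
      next
        case False
        then have "j + 1 = k" using that(1) by simp
        then have "i = 0" using ij by simp
        then show ?thesis using prv_eq \<open>j + 1 = k\<close> by simp
      qed
      then show False using that(3) by simp
    qed
    then have "\<not> adj D (cs ! i) (cs ! j)"
      using unicyclic_adj_cycle_nth[OF oriented unicyclic cycle i that(1)] that(2)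
      unfolding nxt_def by blast
    then show ?thesis by (simp add: skew_adj_eq_0_if_not_adj cycle_matrix_entry)
  qed
  then have "(\<Sum>j<k. g j * M $ (cs ! i) $ (cs ! j)) = (\<Sum>j\<in>{nxt, prv}. g j * M $ (cs ! i) $ (cs ! j))"
    using idx by (intro sum.mono_neutral_right) auto
  also have "\<dots> = g nxt * M $ (cs ! i) $ (cs ! nxt) + g prv * M $ (cs ! i) $ (cs ! prv)"
    using idx by simp
  also have "M $ (cs ! i) $ (cs ! nxt) = arc_sign i"
    using i idx unfolding arc_sign_def nxt_def by (simp add: cycle_matrix_entry)
  also have "M $ (cs ! i) $ (cs ! prv) = - arc_sign (i + k - 1)"
  proof -
    have "i + k - 1 + 1 = i + k" using length_ge_3 by simp
    then have "arc_sign (i + k - 1) = skew_adj D $ (cs ! prv) $ (cs ! i)"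
      using i unfolding arc_sign_def prv_def by simp
    then show ?thesis
      using i idx skew_adj_antisym[OF oriented, of "cs ! i" "cs ! prv"]
      by (simp add: cycle_matrix_entry)
  qed
  finally show ?thesis unfolding nxt_def prv_def by simp
qed

lemma cycle_matrix_kernel:
  assumes closed: "kernel_seq arc_sign a b k = a" "kernel_seq arc_sign a b (Suc k) = b"
  shows "(\<Sum>j<k. kernel_seq arc_sign a b j *\<^sub>R column (cs ! j) M) = 0"
proof -
  let ?f = "kernel_seq arc_sign a b"
  have "(\<Sum>j<k. ?f j * M $ r $ (cs ! j)) = 0" for r
  proof (cases "r \<in> set cs")
    case False
    then show ?thesis by (simp add: cycle_matrix_entry)
  next
    case True
    then obtain i where i: "i < k" "r = cs ! i" by (auto simp: in_set_conv_nth)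
    have shift: "Suc (i + k - 1) = i + k" "Suc (Suc (i + k - 1)) = i + 1 + k"
      using length_ge_3 by auto
    have "?f (i + 1) = ?f (i + 1 + k)" using kernel_seq_periodic[OF closed, of "i + 1"] by simp
    also have "\<dots> = arc_sign (i + k - 1) * arc_sign i * ?f (i + k - 1)"
      by (metis shift kernel_seq.simps(3) arc_sign_periodic)
    finally have "?f (i + 1) * arc_sign i = arc_sign (i + k - 1) * ?f (i + k - 1)"
      using arc_sign_square[of i] by (simp add: algebra_simps)
    then show ?thesis
      using i cycle_matrix_row_sum[OF i(1), of ?f] by (simp add: kernel_seq_mod[OF closed] mult_ac)
  qed
  then show ?thesis by (simp add: vec_eq_iff column_def)
qed

abbreviation "cycle_columns I \<equiv> (\<lambda>j. column (cs ! j) M) ` I"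

lemma column_in_span_by_kernel_seq:
  assumes closed: "kernel_seq arc_sign a b k = a" "kernel_seq arc_sign a b (Suc k) = b"
    and t: "kernel_seq arc_sign a b t = 1" "t < k"
    and I: "\<And>j. j < k \<Longrightarrow> j \<noteq> t \<Longrightarrow> kernel_seq arc_sign a b j \<noteq> 0 \<Longrightarrow> j \<in> I"
  shows "column (cs ! t) M \<in> span (cycle_columns I)"
proof -
  let ?f = "kernel_seq arc_sign a b" and ?C = "\<lambda>j. column (cs ! j) M"
  have "0 = (\<Sum>j<k. ?f j *\<^sub>R ?C j)" using cycle_matrix_kernel[OF closed] by simp
  also have "\<dots> = ?C t + (\<Sum>j\<in>{..<k} - {t}. ?f j *\<^sub>R ?C j)"
    using t by (subst sum.remove[of _ t]) auto
  finally have "?C t = - (\<Sum>j\<in>{..<k} - {t}. ?f j *\<^sub>R ?C j)"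
    by (simp add: eq_neg_iff_add_eq_0 add.commute)
  also have "\<dots> \<in> span (cycle_columns I)"
  proof (intro span_neg span_sum)
    fix j assume "j \<in> {..<k} - {t}"
    then show "?f j *\<^sub>R ?C j \<in> span (cycle_columns I)"
      using I by (cases "?f j = 0") (auto intro: span_mul span_base simp: span_zero)
  qed
  finally show ?thesis .
qed

lemma rank_cycle_matrix_le_card:
  assumes "I \<subseteq> {..<k}" "\<And>j. j < k \<Longrightarrow> j \<notin> I \<Longrightarrow> column (cs ! j) M \<in> span (cycle_columns I)"
  shows "rank M \<le> card I"
proof -
  have fin: "finite I" using assms(1) finite_subset by blast
  have "column w M \<in> span (cycle_columns I)" for w
  proof (cases "w \<in> set cs")
    case False
    then have "column w M = 0" by (simp add: column_def cycle_matrix_entry vec_eq_iff)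
    then show ?thesis by (simp add: span_zero)
  next
    case True
    then obtain j where "j < k" "w = cs ! j" by (auto simp: in_set_conv_nth)
    then show ?thesis using assms(2) by (cases "j \<in> I") (auto intro: span_base)
  qed
  then have "columns M \<subseteq> span (cycle_columns I)" by (auto simp: columns_def)
  then have "dim (columns M) \<le> card (cycle_columns I)" using fin by (intro dim_le_card) auto
  also have "\<dots> \<le> card I" using fin by (rule card_image_le)
  finally show ?thesis by (simp add: column_rank_def)
qed

lemma rank_cycle_matrix_le: "rank M \<le> k"
  using rank_cycle_matrix_le_card[of "{..<k}"] by simp

lemma rank_cycle_matrix_odd:
  assumes "odd k" shows "rank M \<le> k - 1"
proof -
  obtain m where m: "k = 2 * m + 1" using assms oddE by blast
  define b where "b = (\<Prod>i<2 * m. arc_sign (Suc i))"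
  have f0: "kernel_seq arc_sign 1 b k = 1"
    using m kernel_seq_odd[of arc_sign 1 b m] prod_arc_sign_square by (simp add: b_def)
  have "kernel_seq arc_sign 1 b (Suc k) = (\<Prod>i<Suc (Suc (2 * m)). arc_sign i)"
    using m kernel_seq_even[of arc_sign 1 b "Suc m"] by simp
  also have "\<dots> = arc_sign 0 * b * arc_sign (Suc (2 * m))"
    unfolding prod.lessThan_Suc_shift[of arc_sign "Suc (2 * m)"]
      prod.lessThan_Suc[of "\<lambda>i. arc_sign (Suc i)" "2 * m"] b_def by (simp add: ac_simps)
  also have "arc_sign (Suc (2 * m)) = arc_sign 0"
    using arc_sign_periodic[of 0] m by simp
  also have "arc_sign 0 * b * arc_sign 0 = b"
    using arc_sign_square[of 0] by (simp add: algebra_simps)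
  finally have f1: "kernel_seq arc_sign 1 b (Suc k) = b" .
  have "column (cs ! 0) M \<in> span (cycle_columns {1..<k})"
    by (rule column_in_span_by_kernel_seq[OF f0 f1]) (use f0 m in auto)
  then have "rank M \<le> card {1..<k}"
    by (intro rank_cycle_matrix_le_card) (auto simp: not_less_eq_eq)
  then show ?thesis by simp
qed

lemma rank_cycle_matrix_evenly_oriented:
  assumes "even k" and "evenly_oriented D cs" shows "rank M \<le> k - 2"
proof -
  obtain m where m: "k = 2 * m" using assms evenE by blast
  define P where "P = (\<Prod>i<k. arc_sign i)"
  have "P > 0"
    using assms(2) unfolding P_def evenly_oriented_def arc_sign_def by simp
  moreover have "P * P = 1"
    unfolding P_def using prod_arc_sign_square[where g = id and S = "{..<k}"] by simp
  ultimately have P: "P = 1" by (auto simp: square_eq_1_iff)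
  have "arc_sign 0 * (\<Prod>i<k. arc_sign (Suc i)) = P * arc_sign 0"
    unfolding P_def prod.lessThan_Suc_shift[symmetric] prod.lessThan_Suc
    using arc_sign_periodic[of 0] by simp
  moreover have "arc_sign 0 \<noteq> 0" using arc_sign_square[of 0] by auto
  ultimately have Q: "(\<Prod>i<k. arc_sign (Suc i)) = 1" using P by simp
  have closed: "kernel_seq arc_sign 1 0 k = 1" "kernel_seq arc_sign 1 0 (Suc k) = 0"
    "kernel_seq arc_sign 0 1 k = 0" "kernel_seq arc_sign 0 1 (Suc k) = 1"
    using m P Q kernel_seq_even[of arc_sign _ _ m] kernel_seq_odd[of arc_sign _ _ m]
    unfolding P_def by simp_all
  have "column (cs ! 0) M \<in> span (cycle_columns {2..<k})"
  proof (rule column_in_span_by_kernel_seq[OF closed(1,2)])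
    fix j assume "j < k" "j \<noteq> 0" "kernel_seq arc_sign 1 0 j \<noteq> 0"
    then show "j \<in> {2..<k}" by (cases "j = 1") auto
  qed (use length_ge_3 in auto)
  moreover have "column (cs ! 1) M \<in> span (cycle_columns {2..<k})"
  proof (rule column_in_span_by_kernel_seq[OF closed(3,4)])
    fix j assume "j < k" "j \<noteq> 1" "kernel_seq arc_sign 0 1 j \<noteq> 0"
    then show "j \<in> {2..<k}" by (cases "j = 0") auto
  qed (use length_ge_3 in auto)
  ultimately have "rank M \<le> card {2..<k}"
    by (intro rank_cycle_matrix_le_card) (auto simp: not_le less_2_cases_iff)
  then show ?thesis by simp
qed

end

theorem theorem5p1:
  fixes D :: "'n::finite \<Rightarrow> 'n \<Rightarrow> bool" and cs :: "'n list" and n k :: nat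
  assumes "oriented_graph D"
    and "unicyclic D"
    and "is_cycle D cs"
    and "n = CARD('n)"
    and "k = length cs"
    and "k < n"
  shows "(in_U1 D \<longrightarrow>
            (even n \<longrightarrow> sr D \<le> n) \<and> (odd n \<longrightarrow> sr D \<le> n - 1))
       \<and> (in_U2 D cs \<longrightarrow>
            (odd n \<and> odd k \<longrightarrow> sr D \<le> n - 1) \<and>
            (even n \<and> odd k \<longrightarrow> sr D \<le> n - 2) \<and>
            (even n \<and> even k \<and> oddly_oriented D cs \<longrightarrow> sr D \<le> n) \<and>
            (odd n \<and> even k \<and> oddly_oriented D cs \<longrightarrow> sr D \<le> n - 1) \<and>
            (even n \<and> even k \<and> evenly_oriented D cs \<longrightarrow> sr D \<le> n - 2) \<and>
            (odd n \<and> even k \<and> evenly_oriented D cs \<longrightarrow> sr D \<le> n - 3))"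
proof (rule conjI; intro impI)
  assume "in_U1 D"
  then have "sr D \<le> 2 * (n div 2)" using sr_le_if_in_U1 assms(1,4) by blast
  then show "(even n \<longrightarrow> sr D \<le> n) \<and> (odd n \<longrightarrow> sr D \<le> n - 1)" by presburger
next
  assume "in_U2 D cs"
  then obtain c t where "k \<le> c" "c + 2 * t = n"
    and "sr D \<le> rank (induced_skew_adj D (set cs)) + 2 * t"
    using sr_le_if_in_U2 assms(1,3,4,5) by blast
  moreover have cycle: "unicyclic_cycle D cs" using assms(1-3) by unfold_locales
  then have "rank (induced_skew_adj D (set cs)) \<le> (if odd k then k - 1 else if evenly_oriented D cs then k - 2 else k)"
    using unicyclic_cycle.rank_cycle_matrix_le[OF cycle] unicyclic_cycle.rank_cycle_matrix_odd[OF cycle]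
      unicyclic_cycle.rank_cycle_matrix_evenly_oriented[OF cycle] assms(5) by auto
  moreover have "k \<ge> 3" using unicyclic_cycle.length_ge_3[OF cycle] assms(5) by simp
  moreover obtain s where "sr D = s" by simp
  ultimately show
    "(odd n \<and> odd k \<longrightarrow> sr D \<le> n - 1) \<and>
     (even n \<and> odd k \<longrightarrow> sr D \<le> n - 2) \<and>
     (even n \<and> even k \<and> oddly_oriented D cs \<longrightarrow> sr D \<le> n) \<and>
     (odd n \<and> even k \<and> oddly_oriented D cs \<longrightarrow> sr D \<le> n - 1) \<and>
     (even n \<and> even k \<and> evenly_oriented D cs \<longrightarrow> sr D \<le> n - 2) \<and>
     (odd n \<and> even k \<and> evenly_oriented D cs \<longrightarrow> sr D \<le> n - 3)"
    by (simp only: \<open>sr D = s\<close>) (intro conjI impI; elim conjE; simp split: if_splits; presburger)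
qed

end
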